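(* As $s\to 1^+$ (real $s$), $$\lim_{s\to1^+}(s-1)\prod_{p\equiv 1 \pmod 3}\left(1-\frac{1}{p^s}\right)^{-2}=\frac{\sqrt3}{2\pi}\prod_{p\equiv 1\pmod 3}\left(1-\frac{1}{p^2}\right)^{-1},$$ i.e. $\prod_{p\equiv 1 \pmod 3}(1-p^{-s})^{-2}\sim \zeta(s)\frac{\sqrt3}{2\pi}\prod_{p\equiv 1\pmod 3}(1-p^{-2})^{-1}$, where products are over primes $p\equiv1\pmod 3$ and $\zeta$ is the Riemann zeta function. *)

theory Defs
  imports "HOL-Analysis.Analysis"
begin

definition prod_p1mod3 :: "(nat \<Rightarrow> real) \<Rightarrow> real" where
  "prod_p1mod3 g = (\<Prod>n. if prime n \<and> n mod 3 = 1 then g n else 1)"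

end

theory Submission
  imports Defs
begin

text \<open>
  For real \<open>s > 1\<close> let \<open>P\<^sub>c(s)\<close> be the Euler product of \<open>(1 - p\<^sup>-\<^sup>s)\<^sup>-\<^sup>1\<close> over the
  primes \<open>p \<equiv> c (mod 3)\<close>. Multiplying the Euler products of \<open>\<zeta>(s)\<close> and of \<open>L(s, \<chi>)\<close>, \<open>\<chi>\<close> the
  non-principal character modulo 3, and using \<open>(1 - p\<^sup>-\<^sup>s)(1 + p\<^sup>-\<^sup>s) = 1 - p\<^sup>-\<^sup>2\<^sup>s\<close> for
  \<open>p \<equiv> 2\<close>, gives \<open>\<zeta>(s) L(s, \<chi>) = (1 - 3\<^sup>-\<^sup>s)\<^sup>-\<^sup>1 P\<^sub>1(s)\<^sup>2 P\<^sub>2(2s)\<close>. As \<open>s \<rightarrow> 1+\<close>,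
  \<open>(s - 1) \<zeta>(s) \<rightarrow> 1\<close> by comparison with \<open>\<integral> x\<^sup>-\<^sup>s dx\<close>, \<open>L(s, \<chi>) \<rightarrow> L(1, \<chi>) =
  (\<psi>(2/3) - \<psi>(1/3))/3 = \<pi>/(3\<surd>3)\<close> by the reflection formula for the digamma function, and
  \<open>P\<^sub>2(2s) \<rightarrow> P\<^sub>2(2)\<close>, which the Euler product of \<open>\<zeta>(2) = \<pi>\<^sup>2/6\<close> expresses as
  \<open>(8/9)(\<pi>\<^sup>2/6)/P\<^sub>1(2)\<close>. Hence \<open>(s - 1) P\<^sub>1(s)\<^sup>2 \<rightarrow> \<surd>3 P\<^sub>1(2)/(2\<pi>)\<close>.
\<close>

section \<open>Euler products\<close>

definition smooth_numbers :: "nat set \<Rightarrow> nat set" where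
  "smooth_numbers A = {n. n > 0 \<and> prime_factors n \<subseteq> A}"

definition completely_multiplicative :: "(nat \<Rightarrow> 'a :: comm_monoid_mult) \<Rightarrow> bool" where
  "completely_multiplicative g \<longleftrightarrow> g 1 = 1 \<and> (\<forall>m n. g (m * n) = g m * g n)"

lemma completely_multiplicative_prod:
  assumes "completely_multiplicative g" "finite A"
  shows "g (\<Prod>i\<in>A. f i) = (\<Prod>i\<in>A. g (f i))"
  using assms(2) by induction (use assms(1) in \<open>auto simp: completely_multiplicative_def\<close>)

lemma completely_multiplicative_power:
  assumes "completely_multiplicative g"
  shows "g (p ^ k) = g p ^ k"
  by (induction k) (use assms in \<open>auto simp: completely_multiplicative_def\<close>)

lemma completely_multiplicative_powr:
  "completely_multiplicative (\<lambda>n. real n powr -\<sigma>)"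
  by (simp add: completely_multiplicative_def powr_mult)

lemma completely_multiplicative_mult:
  assumes "completely_multiplicative f" "completely_multiplicative g"
  shows "completely_multiplicative (\<lambda>n. f n * g n)"
  using assms by (simp add: completely_multiplicative_def mult_ac)

lemma bij_betw_prime_powers_smooth_numbers:
  assumes fin: "finite A" and pr: "\<And>p. p \<in> A \<Longrightarrow> prime p"
  shows "bij_betw (\<lambda>e. \<Prod>p\<in>A. p ^ e p) (PiE A (\<lambda>_. UNIV)) (smooth_numbers A)"
proof -
  define h where "h e = (\<Prod>p\<in>A. p ^ e p)" for e :: "nat \<Rightarrow> nat"
  have mult: "multiplicity q (h e) = (if q \<in> A then e q else 0)" if "prime q" for q e
    unfolding h_def using multiplicity_prod_prime_powers[OF fin pr that] by blast
  have "inj_on h (PiE A (\<lambda>_. UNIV))"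
  proof (rule inj_onI)
    fix x y assume x: "x \<in> PiE A (\<lambda>_. UNIV)" and y: "y \<in> PiE A (\<lambda>_. UNIV)" and "h x = h y"
    then have "x i = y i" if "i \<in> A" for i
      using mult[OF pr[OF that], of x] mult[OF pr[OF that], of y] that by simp
    then show "x = y" using PiE_ext[OF x y] by blast
  qed
  moreover have "h ` PiE A (\<lambda>_. UNIV) \<subseteq> smooth_numbers A"
  proof safe
    fix e :: "nat \<Rightarrow> nat"
    have "h e > 0"
      unfolding h_def using pr by (auto intro!: prod_pos simp: prime_gt_0_nat)
    moreover have "prime_factors (h e) \<subseteq> A"
      using mult by (auto simp: prime_factors_multiplicity split: if_splits)
    ultimately show "h e \<in> smooth_numbers A" by (simp add: smooth_numbers_def)
  qed
  moreover have "n \<in> h ` PiE A (\<lambda>_. UNIV)" if n: "n \<in> smooth_numbers A" for n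
  proof -
    have n0: "n > 0" and sub: "prime_factors n \<subseteq> A"
      using n by (auto simp: smooth_numbers_def)
    have "n = (\<Prod>p\<in>prime_factors n. p ^ multiplicity p n)"
      using prime_factorization_nat[OF n0] .
    also have "\<dots> = (\<Prod>p\<in>A. p ^ multiplicity p n)"
      by (rule prod.mono_neutral_left[OF fin sub]) (use pr in \<open>auto simp: prime_factors_multiplicity\<close>)
    also have "\<dots> = h (restrict (\<lambda>p. multiplicity p n) A)"
      unfolding h_def by (rule prod.cong) auto
    finally show ?thesis by auto
  qed
  ultimately show ?thesis
    unfolding h_def[symmetric] bij_betw_def by blast
qed

lemma has_sum_geometric_UNIV:
  fixes z :: "'a :: {real_normed_field, banach}"
  assumes "norm z < 1"
  shows "((\<lambda>n. z ^ n) has_sum inverse (1 - z)) UNIV"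
    and "(\<lambda>n. z ^ n) abs_summable_on UNIV"
proof -
  have "summable (\<lambda>n. norm (z ^ n))"
    using assms by (simp add: norm_power summable_geometric)
  moreover have "(\<lambda>n. z ^ n) sums inverse (1 - z)"
    using geometric_sums[OF assms] by (simp add: inverse_eq_divide)
  ultimately show "((\<lambda>n. z ^ n) has_sum inverse (1 - z)) UNIV"
    by (rule norm_summable_imp_has_sum)
  show "(\<lambda>n. z ^ n) abs_summable_on UNIV"
    using norm_summable_imp_summable_on[of "\<lambda>n. norm (z ^ n)"] \<open>summable _\<close> by simp
qed

lemma infsum_smooth_numbers:
  fixes g :: "nat \<Rightarrow> 'a :: {real_normed_field, banach}"
  assumes g: "completely_multiplicative g" and gp: "\<And>p. prime p \<Longrightarrow> norm (g p) < 1"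
    and fin: "finite A" and pr: "\<And>p. p \<in> A \<Longrightarrow> prime p"
  shows "infsum g (smooth_numbers A) = (\<Prod>p\<in>A. inverse (1 - g p))"
proof -
  have "infsum g (smooth_numbers A) = infsum (\<lambda>e. g (\<Prod>p\<in>A. p ^ e p)) (PiE A (\<lambda>_. UNIV))"
    by (rule infsum_reindex_bij_betw[OF bij_betw_prime_powers_smooth_numbers[OF fin pr], symmetric])
  also have "\<dots> = infsum (\<lambda>e. \<Prod>p\<in>A. g p ^ e p) (PiE A (\<lambda>_. UNIV))"
    by (simp add: completely_multiplicative_prod[OF g fin] completely_multiplicative_power[OF g])
  also have "\<dots> = (\<Prod>p\<in>A. infsum (\<lambda>k. g p ^ k) UNIV)"
    by (rule infsum_prod_PiE_abs[OF fin]) (intro has_sum_geometric_UNIV(2) gp pr)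
  also have "\<dots> = (\<Prod>p\<in>A. inverse (1 - g p))"
    by (intro prod.cong refl infsumI has_sum_geometric_UNIV(1) gp pr)
  finally show ?thesis .
qed

lemma has_prod_euler_product:
  fixes g :: "nat \<Rightarrow> 'a :: {real_normed_field, banach}"
  assumes g: "completely_multiplicative g" and g0: "g 0 = 0"
    and gp: "\<And>p. prime p \<Longrightarrow> norm (g p) < 1"
    and abs: "summable (\<lambda>n. norm (g n))" and nz: "(\<Sum>n. g n) \<noteq> 0"
  shows "(\<lambda>n. if prime n then inverse (1 - g n) else 1) has_prod (\<Sum>n. g n)"
proof -
  txt \<open>
    The partial product over the primes up to \<open>N\<close> is the sum of \<open>g\<close> over the \<open>N\<close>-smooth
    numbers, a set containing \<open>{..N}\<close>; so it differs from \<open>\<Sum>n. g n\<close> by at most a tail of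
    \<open>\<Sum>n. norm (g n)\<close>.
  \<close>
  define F where "F n = (if prime n then inverse (1 - g n) else 1)" for n
  define S where "S N = insert 0 (smooth_numbers {p. prime p \<and> p \<le> N})" for N
  have g_summable: "g summable_on UNIV"
    using norm_summable_imp_summable_on[OF abs] .
  have norm_summable: "(\<lambda>n. norm (g n)) summable_on UNIV"
    using norm_summable_imp_summable_on[of "\<lambda>n. norm (g n)"] abs by simp
  have infsum_g: "infsum g UNIV = (\<Sum>n. g n)"
    using has_sum_imp_sums[OF has_sum_infsum[OF g_summable]] by (simp add: sums_iff)
  have partial_product: "(\<Prod>i\<le>N. F i) = infsum g (S N)" for N
  proof -
    have "(\<Prod>i\<le>N. F i) = (\<Prod>p\<in>{p. prime p \<and> p \<le> N}. inverse (1 - g p))"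
      unfolding F_def by (subst prod.inter_filter[symmetric]) (auto intro: prod.cong)
    also have "\<dots> = infsum g (smooth_numbers {p. prime p \<and> p \<le> N})"
      by (rule infsum_smooth_numbers[OF g gp, symmetric]) auto
    also have "\<dots> = infsum g (S N)"
      unfolding S_def by (subst infsum_insert) (auto simp: g0 smooth_numbers_def
          intro: summable_on_subset_banach[OF g_summable])
    finally show ?thesis .
  qed
  have atMost_subset: "{..N} \<subseteq> S N" for N
  proof
    fix n assume "n \<in> {..N}"
    then have "p \<le> N" if "p \<in> prime_factors n" "n > 0" for p
      using that by (auto intro: dvd_imp_le order.trans)
    then show "n \<in> S N" by (cases "n = 0") (auto simp: S_def smooth_numbers_def)
  qed
  have tail_bound: "norm ((\<Prod>i\<le>N. F i) - (\<Sum>n. g n)) \<le> infsum (\<lambda>n. norm (g n)) (- {..N})" for N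
  proof -
    have "(\<Sum>n. g n) - (\<Prod>i\<le>N. F i) = infsum g (- S N)"
      using infsum_Diff[OF g_summable summable_on_subset_banach[OF g_summable]]
      by (simp add: partial_product infsum_g Compl_eq_Diff_UNIV)
    then have "norm ((\<Prod>i\<le>N. F i) - (\<Sum>n. g n)) = norm (infsum g (- S N))"
      by (simp add: norm_minus_commute)
    also have "\<dots> \<le> infsum (\<lambda>n. norm (g n)) (- S N)"
      by (rule norm_infsum_bound) (rule summable_on_subset_banach[OF norm_summable]; simp)
    also have "\<dots> \<le> infsum (\<lambda>n. norm (g n)) (- {..N})"
      by (intro infsum_mono2 summable_on_subset_banach[OF norm_summable] subset_UNIV
          compl_mono atMost_subset) auto
    finally show ?thesis .
  qed
  have "(\<lambda>N. infsum (\<lambda>n. norm (g n)) (- {..N})) \<longlonglongrightarrow> 0"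
  proof -
    have "(\<lambda>N. \<Sum>n\<le>N. norm (g n)) \<longlonglongrightarrow> infsum (\<lambda>n. norm (g n)) UNIV"
      using has_sum_imp_sums[OF has_sum_infsum[OF norm_summable]] by (simp add: sums_def_le)
    from tendsto_diff[OF tendsto_const[of "infsum (\<lambda>n. norm (g n)) UNIV"] this]
    have "(\<lambda>N. infsum (\<lambda>n. norm (g n)) UNIV - (\<Sum>n\<le>N. norm (g n))) \<longlonglongrightarrow> 0"
      by simp
    moreover have "infsum (\<lambda>n. norm (g n)) (- {..N}) =
        infsum (\<lambda>n. norm (g n)) UNIV - (\<Sum>n\<le>N. norm (g n))" for N
      using infsum_Diff[OF norm_summable, of "{..N}"] by (simp add: Compl_eq_Diff_UNIV)
    ultimately show ?thesis by simp
  qed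
  then have "(\<lambda>N. (\<Prod>i\<le>N. F i) - (\<Sum>n. g n)) \<longlonglongrightarrow> 0"
    by (rule Lim_null_comparison[rotated]) (use tail_bound in auto)
  then have "raw_has_prod F 0 (\<Sum>n. g n)"
    using nz by (simp add: raw_has_prod_def LIM_zero_iff)
  then show ?thesis
    unfolding F_def has_prod_def by blast
qed

section \<open>Dirichlet series over primes in residue classes modulo 3\<close>

lemma prime_powr_less_1:
  assumes "prime p" "\<sigma> > 0"
  shows "real p powr -\<sigma> < 1"
  using assms prime_gt_1_nat[OF assms(1)] by (simp add: powr_less_one)

lemma summable_powr_neg:
  assumes "\<sigma> > 1"
  shows "summable (\<lambda>n. real n powr -\<sigma>)"
  using summable_real_powr_iff[of "-\<sigma>"] assms by simp

definition zeta_real :: "real \<Rightarrow> real" where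
  "zeta_real \<sigma> = (\<Sum>n. real n powr -\<sigma>)"

text \<open>The term \<open>n = 0\<close> vanishes since \<open>0 powr x = 0\<close>.\<close>

definition prime_restricted_zeta :: "(nat \<Rightarrow> bool) \<Rightarrow> real \<Rightarrow> real" where
  "prime_restricted_zeta P \<sigma> =
     (\<Sum>n. if \<forall>p\<in>prime_factors n. P p then real n powr -\<sigma> else 0)"

definition euler_factor :: "(nat \<Rightarrow> bool) \<Rightarrow> real \<Rightarrow> nat \<Rightarrow> real" where
  "euler_factor P \<sigma> n = (if prime n \<and> P n then inverse (1 - real n powr -\<sigma>) else 1)"

lemma prime_restricted_zeta_True: "prime_restricted_zeta (\<lambda>_. True) = zeta_real"
  by (simp add: prime_restricted_zeta_def zeta_real_def fun_eq_iff)

lemma prime_restricted_zeta_ge_1: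
  assumes "\<sigma> > 1"
  shows "prime_restricted_zeta P \<sigma> \<ge> 1"
proof -
  have "summable (\<lambda>n. if \<forall>p\<in>prime_factors n. P p then real n powr -\<sigma> else 0)"
    by (rule summable_comparison_test'[OF summable_powr_neg[OF assms]]) auto
  from sum_le_suminf[OF this, of "{1}"] show ?thesis
    by (simp add: prime_restricted_zeta_def)
qed

lemma has_prod_euler_factor:
  assumes "\<sigma> > 1"
  shows "euler_factor P \<sigma> has_prod prime_restricted_zeta P \<sigma>"
proof -
  define g where "g n = (if \<forall>p\<in>prime_factors n. P p then real n powr -\<sigma> else 0)" for n
  have "g (m * n) = g m * g n" for m n
    by (cases "m = 0 \<or> n = 0") (auto simp: g_def prime_factors_product powr_mult)
  then have "completely_multiplicative g"
    by (simp add: completely_multiplicative_def g_def)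
  then have "(\<lambda>n. if prime n then inverse (1 - g n) else 1) has_prod (\<Sum>n. g n)"
  proof (rule has_prod_euler_product)
    show "g 0 = 0"
      by (simp add: g_def)
    show "norm (g p) < 1" if "prime p" for p
      using that assms prime_powr_less_1 by (simp add: g_def prime_prime_factors)
    show "summable (\<lambda>n. norm (g n))"
      by (rule summable_comparison_test'[OF summable_powr_neg[OF assms]]) (auto simp: g_def)
    show "(\<Sum>n. g n) \<noteq> 0"
      using prime_restricted_zeta_ge_1[OF assms, of P] by (simp add: prime_restricted_zeta_def g_def)
  qed
  moreover have "(\<lambda>n. if prime n then inverse (1 - g n) else 1) = euler_factor P \<sigma>"
    by (auto simp: fun_eq_iff euler_factor_def g_def prime_prime_factors)
  ultimately show ?thesis
    by (simp add: prime_restricted_zeta_def g_def)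
qed

lemma has_prod_zeta_real:
  "\<sigma> > 1 \<Longrightarrow> euler_factor (\<lambda>_. True) \<sigma> has_prod zeta_real \<sigma>"
  using has_prod_euler_factor[of \<sigma> "\<lambda>_. True"] by (simp add: prime_restricted_zeta_True)

definition chi3 :: "nat \<Rightarrow> real" where
  "chi3 n = (if n mod 3 = 1 then 1 else if n mod 3 = 2 then -1 else 0)"

text \<open>
  \<open>L(s, \<chi>)\<close> as its Dirichlet series grouped in blocks of three; the grouped series still
  converges at \<open>s = 1\<close>, where its value is needed.
\<close>

definition L_chi3 :: "real \<Rightarrow> real" where
  "L_chi3 \<sigma> = (\<Sum>k. real (3 * k + 1) powr -\<sigma> - real (3 * k + 2) powr -\<sigma>)"

lemma completely_multiplicative_chi3: "completely_multiplicative chi3"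
proof -
  have "chi3 (m * n) = chi3 m * chi3 n" for m n
  proof -
    have "(m * n) mod 3 = ((m mod 3) * (n mod 3)) mod 3"
      by (simp add: mod_mult_eq)
    moreover have "m mod 3 \<in> {0, 1, 2}" "n mod 3 \<in> {0, 1, 2}"
      by auto
    ultimately show ?thesis
      by (auto simp: chi3_def)
  qed
  then show ?thesis
    by (simp add: completely_multiplicative_def chi3_def)
qed

lemma sums_L_chi3:
  assumes "\<sigma> > 1"
  shows "(\<lambda>n. chi3 n * real n powr -\<sigma>) sums L_chi3 \<sigma>"
    and "(\<lambda>k. real (3 * k + 1) powr -\<sigma> - real (3 * k + 2) powr -\<sigma>) sums L_chi3 \<sigma>"
proof -
  have summable: "summable (\<lambda>n. chi3 n * real n powr -\<sigma>)"
    by (rule summable_comparison_test'[OF summable_powr_neg[OF assms]]) (auto simp: chi3_def)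
  from sums_group[OF summable_sums[OF summable], of 3]
  have "(\<lambda>k. \<Sum>i\<in>{k * 3..<k * 3 + 3}. chi3 i * real i powr -\<sigma>) sums (\<Sum>n. chi3 n * real n powr -\<sigma>)"
    by simp
  moreover have "(\<Sum>i\<in>{k * 3..<k * 3 + 3}. chi3 i * real i powr -\<sigma>)
      = real (3 * k + 1) powr -\<sigma> - real (3 * k + 2) powr -\<sigma>" for k
  proof -
    have "{k * 3..<k * 3 + 3} = {3 * k, 3 * k + 1, 3 * k + 2}" by auto
    moreover have "chi3 (3 * k) = 0" "chi3 (3 * k + 1) = 1" "chi3 (3 * k + 2) = -1"
      by (simp_all add: chi3_def mod_Suc)
    ultimately show ?thesis by simp
  qed
  ultimately have grouped: "(\<lambda>k. real (3 * k + 1) powr -\<sigma> - real (3 * k + 2) powr -\<sigma>)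
      sums (\<Sum>n. chi3 n * real n powr -\<sigma>)"
    by simp
  then have "L_chi3 \<sigma> = (\<Sum>n. chi3 n * real n powr -\<sigma>)"
    unfolding L_chi3_def by (simp add: sums_iff)
  with summable grouped show "(\<lambda>n. chi3 n * real n powr -\<sigma>) sums L_chi3 \<sigma>"
    and "(\<lambda>k. real (3 * k + 1) powr -\<sigma> - real (3 * k + 2) powr -\<sigma>) sums L_chi3 \<sigma>"
    by (simp_all add: summable_sums)
qed

lemma L_chi3_pos:
  assumes "\<sigma> > 1"
  shows "L_chi3 \<sigma> > 0"
proof -
  define t where "t k = real (3 * k + 1) powr -\<sigma> - real (3 * k + 2) powr -\<sigma>" for k
  have "t sums L_chi3 \<sigma>"
    using sums_L_chi3(2)[OF assms] unfolding t_def[abs_def] .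
  moreover have "t k \<ge> 0" for k
    using assms by (auto simp: t_def intro: powr_mono2')
  moreover have "t 0 > 0"
    using assms by (simp add: t_def powr_less_one)
  ultimately show ?thesis
    using sum_le_suminf[of t "{0}"] by (fastforce simp: sums_iff)
qed

lemma has_prod_L_chi3:
  assumes "\<sigma> > 1"
  shows "(\<lambda>n. if prime n then inverse (1 - chi3 n * real n powr -\<sigma>) else 1) has_prod L_chi3 \<sigma>"
proof -
  have "(\<lambda>n. if prime n then inverse (1 - chi3 n * real n powr -\<sigma>) else 1)
      has_prod (\<Sum>n. chi3 n * real n powr -\<sigma>)"
  proof (rule has_prod_euler_product)
    show "completely_multiplicative (\<lambda>n. chi3 n * real n powr -\<sigma>)"
      by (intro completely_multiplicative_mult completely_multiplicative_chi3
          completely_multiplicative_powr)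
    show "chi3 0 * real 0 powr -\<sigma> = 0"
      by simp
    show "norm (chi3 p * real p powr -\<sigma>) < 1" if "prime p" for p
      using prime_powr_less_1[OF that, of \<sigma>] assms by (auto simp: chi3_def abs_mult)
    show "summable (\<lambda>n. norm (chi3 n * real n powr -\<sigma>))"
      by (rule summable_comparison_test'[OF summable_powr_neg[OF assms]]) (auto simp: chi3_def)
    show "(\<Sum>n. chi3 n * real n powr -\<sigma>) \<noteq> 0"
      using sums_unique[OF sums_L_chi3(1)[OF assms]] L_chi3_pos[OF assms] by simp
  qed
  then show ?thesis
    using sums_unique[OF sums_L_chi3(1)[OF assms]] by simp
qed

lemma prime_mod_3_cases:
  assumes "prime (p :: nat)"
  obtains "p = 3" | "p mod 3 = 1" | "p mod 3 = 2"
proof -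
  have "p mod 3 \<in> {0, 1, 2}"
    by auto
  moreover have "p mod 3 = 0 \<Longrightarrow> p = 3"
    using assms primes_dvd_imp_eq[of 3 p] by (auto simp: dvd_eq_mod_eq_0)
  ultimately show ?thesis
    using that by auto
qed

lemma has_prod_euler_factor_3:
  "euler_factor (\<lambda>p. p = 3) \<sigma> has_prod inverse (1 - 3 powr -\<sigma>)"
proof -
  have "euler_factor (\<lambda>p. p = 3) \<sigma> = (\<lambda>n. if n \<in> {3} then inverse (1 - real n powr -\<sigma>) else 1)"
    by (auto simp: fun_eq_iff euler_factor_def)
  with has_prod_If_finite_set[of "{3}" "\<lambda>n. inverse (1 - real n powr -\<sigma>)"] show ?thesis
    by simp
qed

lemma zeta_real_euler_mod_3:
  assumes "\<sigma> > 1"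
  shows "zeta_real \<sigma> = inverse (1 - 3 powr -\<sigma>)
    * prime_restricted_zeta (\<lambda>p. p mod 3 = 1) \<sigma> * prime_restricted_zeta (\<lambda>p. p mod 3 = 2) \<sigma>"
proof -
  have "(\<lambda>n. euler_factor (\<lambda>p. p = 3) \<sigma> n
      * euler_factor (\<lambda>p. p mod 3 = 1) \<sigma> n * euler_factor (\<lambda>p. p mod 3 = 2) \<sigma> n)
    has_prod (inverse (1 - 3 powr -\<sigma>)
      * prime_restricted_zeta (\<lambda>p. p mod 3 = 1) \<sigma> * prime_restricted_zeta (\<lambda>p. p mod 3 = 2) \<sigma>)"
    by (intro has_prod_mult has_prod_euler_factor_3 has_prod_euler_factor assms)
  moreover have "euler_factor (\<lambda>p. p = 3) \<sigma> n
      * euler_factor (\<lambda>p. p mod 3 = 1) \<sigma> n * euler_factor (\<lambda>p. p mod 3 = 2) \<sigma> n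
    = euler_factor (\<lambda>_. True) \<sigma> n" for n
    by (cases "prime n") (auto simp: euler_factor_def elim: prime_mod_3_cases)
  ultimately have "euler_factor (\<lambda>_. True) \<sigma> has_prod (inverse (1 - 3 powr -\<sigma>)
      * prime_restricted_zeta (\<lambda>p. p mod 3 = 1) \<sigma> * prime_restricted_zeta (\<lambda>p. p mod 3 = 2) \<sigma>)"
    by simp
  then show ?thesis
    using has_prod_unique2[OF has_prod_zeta_real[OF assms]] by simp
qed

lemma zeta_real_mult_L_chi3:
  assumes "\<sigma> > 1"
  shows "zeta_real \<sigma> * L_chi3 \<sigma> = inverse (1 - 3 powr -\<sigma>)
    * prime_restricted_zeta (\<lambda>p. p mod 3 = 1) \<sigma> ^ 2
    * prime_restricted_zeta (\<lambda>p. p mod 3 = 2) (2 * \<sigma>)"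
proof -
  have "(\<lambda>n. euler_factor (\<lambda>p. p = 3) \<sigma> n
      * euler_factor (\<lambda>p. p mod 3 = 1) \<sigma> n ^ 2 * euler_factor (\<lambda>p. p mod 3 = 2) (2 * \<sigma>) n)
    has_prod (inverse (1 - 3 powr -\<sigma>) * prime_restricted_zeta (\<lambda>p. p mod 3 = 1) \<sigma> ^ 2
      * prime_restricted_zeta (\<lambda>p. p mod 3 = 2) (2 * \<sigma>))"
    using assms
    by (intro has_prod_mult has_prod_power has_prod_euler_factor_3 has_prod_euler_factor) auto
  moreover have "euler_factor (\<lambda>p. p = 3) \<sigma> n
      * euler_factor (\<lambda>p. p mod 3 = 1) \<sigma> n ^ 2 * euler_factor (\<lambda>p. p mod 3 = 2) (2 * \<sigma>) n
    = euler_factor (\<lambda>_. True) \<sigma> n * (if prime n then inverse (1 - chi3 n * real n powr -\<sigma>) else 1)"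
    for n
  proof (cases "prime n")
    case True
    have "1 - real n powr -(2 * \<sigma>) = (1 - real n powr -\<sigma>) * (1 + real n powr -\<sigma>)"
      by (simp add: algebra_simps powr_add[symmetric])
    with True show ?thesis
      by (cases rule: prime_mod_3_cases)
        (auto simp: euler_factor_def chi3_def power2_eq_square inverse_mult_distrib)
  qed (auto simp: euler_factor_def)
  ultimately have "(\<lambda>n. euler_factor (\<lambda>_. True) \<sigma> n
      * (if prime n then inverse (1 - chi3 n * real n powr -\<sigma>) else 1))
    has_prod (inverse (1 - 3 powr -\<sigma>) * prime_restricted_zeta (\<lambda>p. p mod 3 = 1) \<sigma> ^ 2
      * prime_restricted_zeta (\<lambda>p. p mod 3 = 2) (2 * \<sigma>))"
    by simp
  moreover have "(\<lambda>n. euler_factor (\<lambda>_. True) \<sigma> n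
      * (if prime n then inverse (1 - chi3 n * real n powr -\<sigma>) else 1))
    has_prod (zeta_real \<sigma> * L_chi3 \<sigma>)"
    by (intro has_prod_mult has_prod_zeta_real has_prod_L_chi3 assms)
  ultimately show ?thesis
    using has_prod_unique2 by blast
qed

section \<open>Behaviour as \<open>s \<rightarrow> 1+\<close>\<close>

lemma powr_neg_above_tangent:
  fixes x y t :: real
  assumes "x > 0" "y > 0" "t \<ge> 0"
  shows "x powr -t - t * x powr (-t - 1) * (y - x) \<le> y powr -t"
proof -
  define q where "q = y / x"
  have q: "q > 0"
    using assms by (simp add: q_def)
  have "1 - t * (q - 1) \<le> 1 - t * ln q"
    using ln_le_minus_one[OF q] assms(3) by (simp add: mult_left_mono)
  also have "\<dots> \<le> q powr -t"
    using exp_ge_add_one_self[of "-t * ln q"] q by (simp add: powr_def)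
  finally have "x powr -t * (1 - t * (q - 1)) \<le> x powr -t * q powr -t"
    by (simp add: mult_left_mono)
  moreover have "x powr -t * q powr -t = y powr -t"
    using assms by (simp add: q_def powr_divide)
  moreover have "x powr -t * (1 - t * (q - 1)) = x powr -t - t * x powr (-t - 1) * (y - x)"
    using assms by (simp add: q_def powr_diff field_simps)
  ultimately show ?thesis
    by simp
qed

lemma zeta_real_bounds:
  assumes "s > 1"
  shows "1 / (s - 1) \<le> zeta_real s" and "zeta_real s \<le> 1 + 1 / (s - 1)"
proof -
  define t where "t = s - 1"
  have t: "t > 0"
    using assms by (simp add: t_def)
  txt \<open>Compare with a telescoping series via the tangent inequality for \<open>x powr -t\<close>.\<close>
  define a where "a n = real (Suc n) powr -t / t" for n
  have "a \<longlonglongrightarrow> 0"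
    unfolding a_def using t
    by (intro tendsto_divide_zero tendsto_neg_powr filterlim_compose[OF filterlim_real_sequentially]
        filterlim_Suc) auto
  from telescope_sums'[OF this]
  have telescope: "(\<lambda>n. a n - a (Suc n)) sums (1 / t)"
    by (simp add: a_def)
  have summable: "summable (\<lambda>n. real n powr -s)"
    using summable_powr_neg[OF assms] .
  have sums1: "(\<lambda>n. real (Suc n) powr -s) sums zeta_real s"
    using summable_sums[OF summable] sums_Suc_iff[of "\<lambda>n. real n powr -s"]
    by (simp add: zeta_real_def)
  then have sums2: "(\<lambda>n. real (Suc (Suc n)) powr -s) sums (zeta_real s - 1)"
    using sums_Suc_iff[of "\<lambda>n. real (Suc n) powr -s"] by simp
  have "a n - a (Suc n) \<le> real (Suc n) powr -s" for n
    using powr_neg_above_tangent[of "real (Suc n)" "real (Suc (Suc n))" t] t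
    by (simp add: a_def t_def diff_divide_distrib[symmetric] divide_le_eq algebra_simps)
  from sums_le[OF this telescope sums1]
  show "1 / (s - 1) \<le> zeta_real s"
    by (simp add: t_def)
  have "real (Suc (Suc n)) powr -s \<le> a n - a (Suc n)" for n
    using powr_neg_above_tangent[of "real (Suc (Suc n))" "real (Suc n)" t] t
    by (simp add: a_def t_def diff_divide_distrib[symmetric] le_divide_eq algebra_simps)
  from sums_le[OF this sums2 telescope]
  show "zeta_real s \<le> 1 + 1 / (s - 1)"
    by (simp add: t_def)
qed

lemma zeta_real_residue: "((\<lambda>s. (s - 1) * zeta_real s) \<longlongrightarrow> 1) (at_right 1)"
proof (rule tendsto_sandwich[of "\<lambda>_. 1" _ _ "\<lambda>s. s"])
  have ev: "eventually (\<lambda>s::real. s > 1) (at_right 1)"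
    by (simp add: eventually_at_right_less)
  show "eventually (\<lambda>s. 1 \<le> (s - 1) * zeta_real s) (at_right 1)"
    using ev by eventually_elim (use zeta_real_bounds(1) in \<open>force simp: field_simps\<close>)
  show "eventually (\<lambda>s. (s - 1) * zeta_real s \<le> s) (at_right 1)"
    using ev
  proof eventually_elim
    case (elim s)
    then have "(s - 1) * zeta_real s \<le> (s - 1) * (1 + 1 / (s - 1))"
      using zeta_real_bounds(2)[OF elim] by (simp add: mult_left_mono)
    also have "\<dots> = s"
      using elim by (simp add: field_simps)
    finally show ?case .
  qed
qed (auto intro: tendsto_ident_at)

lemma continuous_on_suminf_M_test:
  fixes f :: "nat \<Rightarrow> 'a :: topological_space \<Rightarrow> 'b :: banach"
  assumes "\<And>k x. x \<in> A \<Longrightarrow> norm (f k x) \<le> M k" and "summable M"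
    and "\<And>k. continuous_on A (f k)"
  shows "continuous_on A (\<lambda>x. \<Sum>k. f k x)"
proof (rule uniform_limit_theorem)
  show "\<forall>\<^sub>F n in sequentially. continuous_on A (\<lambda>x. \<Sum>k<n. f k x)"
    using assms(3) by (intro always_eventually allI continuous_on_sum) auto
  show "uniform_limit A (\<lambda>n x. \<Sum>k<n. f k x) (\<lambda>x. \<Sum>k. f k x) sequentially"
    using assms(1,2) by (rule Weierstrass_m_test)
qed simp

lemma continuous_on_prime_restricted_zeta:
  assumes "a > 1"
  shows "continuous_on {a..} (prime_restricted_zeta P)"
  unfolding prime_restricted_zeta_def
proof (rule continuous_on_suminf_M_test[OF _ summable_powr_neg[OF assms]])
  show "norm (if \<forall>p\<in>prime_factors n. P p then real n powr -\<sigma> else 0) \<le> real n powr -a"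
    if "\<sigma> \<in> {a..}" for n \<sigma>
    using that by (cases "n = 0") (auto intro: powr_mono)
  show "continuous_on {a..} (\<lambda>\<sigma>. if \<forall>p\<in>prime_factors n. P p then real n powr -\<sigma> else 0)" for n
  proof (cases "\<forall>p\<in>prime_factors n. P p")
    case True
    then show ?thesis
      by (cases "n = 0") (auto intro!: continuous_intros)
  qed (simp only: if_False continuous_on_const)
qed

lemma isCont_prime_restricted_zeta:
  assumes "\<sigma> > 1"
  shows "isCont (prime_restricted_zeta P) \<sigma>"
proof (rule continuous_on_interior[OF continuous_on_prime_restricted_zeta])
  show "(1 + \<sigma>) / 2 > 1"
    using assms by simp
  show "\<sigma> \<in> interior {(1 + \<sigma>) / 2..}"
    using assms by simp
qed

lemma continuous_on_L_chi3: "continuous_on {1..2} L_chi3"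
  unfolding L_chi3_def
proof (rule continuous_on_suminf_M_test)
  show "summable (\<lambda>k. 2 * real (Suc k) powr -2)"
    using summable_powr_neg[of 2] summable_Suc_iff[of "\<lambda>n. real n powr -2"] by simp
  show "norm (real (3 * k + 1) powr -\<sigma> - real (3 * k + 2) powr -\<sigma>) \<le> 2 * real (Suc k) powr -2"
    if "\<sigma> \<in> {1..2}" for k \<sigma>
  proof -
    define x where "x = real (3 * k + 1)"
    have "x \<ge> 1" "real (3 * k + 2) = x + 1"
      by (simp_all add: x_def)
    then have "0 \<le> x powr -\<sigma> - (x + 1) powr -\<sigma>"
      "x powr -\<sigma> - (x + 1) powr -\<sigma> \<le> \<sigma> * x powr (-\<sigma> - 1)"
      using that powr_neg_above_tangent[of x "x + 1" \<sigma>] by (auto intro: powr_mono2')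
    moreover have "\<sigma> * x powr (-\<sigma> - 1) \<le> 2 * x powr -2"
      using that \<open>x \<ge> 1\<close> by (intro mult_mono powr_mono) auto
    moreover have "x powr -2 \<le> real (Suc k) powr -2"
      by (intro powr_mono2') (auto simp: x_def)
    ultimately show ?thesis
      using \<open>real (3 * k + 2) = x + 1\<close> by (simp add: x_def)
  qed
  show "continuous_on {1..2} (\<lambda>\<sigma>. real (3 * k + 1) powr -\<sigma> - real (3 * k + 2) powr -\<sigma>)" for k
    by (intro continuous_intros) auto
qed

lemma Digamma_reflection_complex:
  fixes z :: complex
  assumes "z \<notin> \<int>"
  shows "Digamma (1 - z) - Digamma z = of_real pi * cos (of_real pi * z) / sin (of_real pi * z)"
proof -
  have "1 - z \<notin> \<int>"
    using assms Ints_diff[OF Ints_1, of "1 - z"] by auto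
  then have z: "z \<notin> \<int>\<^sub>\<le>\<^sub>0" and z': "1 - z \<notin> \<int>\<^sub>\<le>\<^sub>0"
    using assms nonpos_Ints_subset_Ints by auto
  have sin_nz: "sin (of_real pi * z) \<noteq> 0"
    using assms by (auto simp: sin_eq_0)
  txt \<open>Differentiate both sides of \<open>\<Gamma>(z) \<Gamma>(1 - z) = \<pi> / sin (\<pi> z)\<close>.\<close>
  have "((\<lambda>z. Gamma z * Gamma (1 - z)) has_field_derivative
      Gamma z * Gamma (1 - z) * (Digamma z - Digamma (1 - z))) (at z)"
    using z z' by (auto intro!: derivative_eq_intros simp: algebra_simps)
  moreover have "((\<lambda>z. Gamma z * Gamma (1 - z)) has_field_derivative
      - (of_real pi * (cos (of_real pi * z) * of_real pi)) / sin (of_real pi * z) ^ 2) (at z)"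
    unfolding Gamma_reflection_complex using sin_nz
    by (auto intro!: derivative_eq_intros simp: power2_eq_square)
  ultimately have "of_real pi / sin (of_real pi * z) * (Digamma z - Digamma (1 - z))
      = - (of_real pi * (cos (of_real pi * z) * of_real pi)) / sin (of_real pi * z) ^ 2"
    using DERIV_unique unfolding Gamma_reflection_complex by blast
  then have "of_real pi / sin (of_real pi * z) * (Digamma (1 - z) - Digamma z)
      = of_real pi / sin (of_real pi * z) * (of_real pi * cos (of_real pi * z) / sin (of_real pi * z))"
    by (simp add: algebra_simps power2_eq_square)
  then show ?thesis
    using sin_nz unfolding mult_cancel_left by simp
qed

lemma Digamma_two_thirds_minus_one_third: "Digamma (2 / 3 :: real) - Digamma (1 / 3) = pi / sqrt 3"
proof -
  have "(1 / 3 :: complex) \<notin> \<int>"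
    using fraction_not_in_Ints[of 3 1] by simp
  from Digamma_reflection_complex[OF this]
  have "Digamma (2 / 3 :: complex) - Digamma (1 / 3)
      = of_real pi * cos (of_real (pi / 3)) / sin (of_real (pi / 3))"
    by simp
  also have "\<dots> = of_real pi * of_real (1 / 2) / of_real (sqrt 3 / 2)"
    by (simp only: cos_of_real sin_of_real cos_60 sin_60)
  also have "\<dots> = of_real (pi / sqrt 3)"
    by simp
  finally have "of_real (Digamma (2 / 3 :: real) - Digamma (1 / 3)) = (of_real (pi / sqrt 3) :: complex)"
    using Polygamma_of_real[of "1 / 3" 0, where 'a = complex]
      Polygamma_of_real[of "2 / 3" 0, where 'a = complex] by simp
  then show ?thesis
    by (simp only: of_real_eq_iff)
qed

lemma L_chi3_1: "L_chi3 1 = pi / (3 * sqrt 3)"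
proof -
  have term_eq: "inverse (real (Suc k)) - inverse (2 / 3 + real k)
      - (inverse (real (Suc k)) - inverse (1 / 3 + real k))
    = 3 * (real (3 * k + 1) powr -1 - real (3 * k + 2) powr -1)" for k
  proof -
    have "inverse (1 / 3 + real k) = 3 * inverse (real (3 * k + 1))"
      "inverse (2 / 3 + real k) = 3 * inverse (real (3 * k + 2))"
      by (simp_all add: field_simps)
    then show ?thesis
      by (simp add: powr_minus algebra_simps)
  qed
  have "(\<lambda>k. inverse (real (Suc k)) - inverse (2 / 3 + real k)
      - (inverse (real (Suc k)) - inverse (1 / 3 + real k)))
    sums ((\<Sum>k. inverse (real (Suc k)) - inverse (2 / 3 + real k))
      - (\<Sum>k. inverse (real (Suc k)) - inverse (1 / 3 + real k)))"
    by (rule sums_diff; rule summable_sums, rule summable_Digamma) auto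
  also have "\<dots> = Digamma (2 / 3 :: real) - Digamma (1 / 3)"
    by (simp add: Digamma_def)
  also have "\<dots> = pi / sqrt 3"
    by (rule Digamma_two_thirds_minus_one_third)
  also have "\<dots> = 3 * (pi / (3 * sqrt 3))"
    by simp
  finally have "(\<lambda>k. 3 * (real (3 * k + 1) powr -1 - real (3 * k + 2) powr -1))
      sums (3 * (pi / (3 * sqrt 3)))"
    by (simp only: term_eq)
  then have "(\<lambda>k. real (3 * k + 1) powr -1 - real (3 * k + 2) powr -1) sums (pi / (3 * sqrt 3))"
    by (subst (asm) sums_mult_iff) simp_all
  then show ?thesis
    unfolding L_chi3_def by (rule sums_unique[symmetric])
qed

lemma L_chi3_tendsto: "(L_chi3 \<longlongrightarrow> pi / (3 * sqrt 3)) (at_right 1)"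
proof -
  have "(L_chi3 \<longlongrightarrow> L_chi3 1) (at 1 within {1..2})"
    using continuous_on_L_chi3 by (simp add: continuous_on_def)
  then show ?thesis
    using at_within_Icc_at_right[of "1 :: real" 2] by (simp add: L_chi3_1)
qed

lemma zeta_real_2: "zeta_real 2 = pi\<^sup>2 / 6"
proof -
  have "(\<lambda>n. real (Suc n) powr -2) sums (pi\<^sup>2 / 6)"
    using inverse_squares_sums by (simp add: powr_minus_divide powr_numeral add.commute)
  then have "(\<lambda>n. real n powr -2) sums (pi\<^sup>2 / 6 + real 0 powr -2)"
    by (subst (asm) sums_Suc_iff)
  then show ?thesis
    unfolding zeta_real_def by (simp add: sums_iff)
qed

lemma prod_p1mod3_euler_factor:
  assumes "\<sigma> > 1"
  shows "prod_p1mod3 (\<lambda>p. inverse (1 - 1 / real p powr \<sigma>) ^ k)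
    = prime_restricted_zeta (\<lambda>p. p mod 3 = 1) \<sigma> ^ k"
proof -
  have "(\<lambda>n. euler_factor (\<lambda>p. p mod 3 = 1) \<sigma> n ^ k)
      has_prod (prime_restricted_zeta (\<lambda>p. p mod 3 = 1) \<sigma> ^ k)"
    by (intro has_prod_power has_prod_euler_factor assms)
  moreover have "euler_factor (\<lambda>p. p mod 3 = 1) \<sigma> n ^ k
      = (if prime n \<and> n mod 3 = 1 then inverse (1 - 1 / real n powr \<sigma>) ^ k else 1)" for n
    by (simp add: euler_factor_def powr_minus_divide)
  ultimately have "(\<lambda>n. if prime n \<and> n mod 3 = 1 then inverse (1 - 1 / real n powr \<sigma>) ^ k else 1)
      has_prod (prime_restricted_zeta (\<lambda>p. p mod 3 = 1) \<sigma> ^ k)"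
    by simp
  then show ?thesis
    unfolding prod_p1mod3_def by (rule has_prod_unique[symmetric])
qed

lemma prod_p1mod3_eq_zeta_real_L_chi3:
  assumes "s > 1"
  shows "prod_p1mod3 (\<lambda>p. inverse ((1 - 1 / real p powr s)\<^sup>2))
    = zeta_real s * L_chi3 s * (1 - 3 powr -s) / prime_restricted_zeta (\<lambda>p. p mod 3 = 2) (2 * s)"
proof -
  define c where "c = 1 - 3 powr -s"
  define Z1 where "Z1 = prime_restricted_zeta (\<lambda>p. p mod 3 = 1) s"
  define Z2 where "Z2 = prime_restricted_zeta (\<lambda>p. p mod 3 = 2) (2 * s)"
  have "c \<noteq> 0" "Z2 \<noteq> 0"
    using assms prime_restricted_zeta_ge_1[of "2 * s" "\<lambda>p. p mod 3 = 2"]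
    by (auto simp: c_def Z2_def powr_less_one)
  moreover have "zeta_real s * L_chi3 s = inverse c * Z1 ^ 2 * Z2"
    using zeta_real_mult_L_chi3[OF assms] by (simp add: c_def Z1_def Z2_def)
  moreover have "prod_p1mod3 (\<lambda>p. inverse ((1 - 1 / real p powr s)\<^sup>2)) = Z1 ^ 2"
    using prod_p1mod3_euler_factor[OF assms, of 2] by (simp add: Z1_def power_inverse)
  ultimately show ?thesis
    unfolding c_def[symmetric] Z2_def[symmetric] by (simp add: field_simps)
qed

lemma prime_restricted_zeta_2_mod_3_at_2:
  "prime_restricted_zeta (\<lambda>p. p mod 3 = 2) 2
    = 4 * pi\<^sup>2 / (27 * prod_p1mod3 (\<lambda>p. inverse (1 - 1 / (real p)\<^sup>2)))"
proof -
  define Z1 where "Z1 = prime_restricted_zeta (\<lambda>p. p mod 3 = 1) 2"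
  have "pi\<^sup>2 / 6 = inverse (1 - 1 / 9) * Z1 * prime_restricted_zeta (\<lambda>p. p mod 3 = 2) 2"
    using zeta_real_euler_mod_3[of 2] zeta_real_2 by (simp add: Z1_def powr_minus_divide)
  moreover have "prod_p1mod3 (\<lambda>p. inverse (1 - 1 / (real p)\<^sup>2)) = Z1"
    using prod_p1mod3_euler_factor[of 2 1] by (simp add: Z1_def powr_numeral)
  moreover have "Z1 \<noteq> 0"
    using prime_restricted_zeta_ge_1[of 2 "\<lambda>p. p mod 3 = 1"] by (simp add: Z1_def)
  ultimately show ?thesis
    by (simp add: field_simps)
qed

lemma tendsto_prime_restricted_zeta_double:
  "((\<lambda>s. prime_restricted_zeta P (2 * s)) \<longlongrightarrow> prime_restricted_zeta P 2) (at_right 1)"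
proof (rule isCont_tendsto_compose[of 2 "prime_restricted_zeta P"])
  show "isCont (prime_restricted_zeta P) 2"
    by (rule isCont_prime_restricted_zeta) simp
  show "((\<lambda>s. 2 * s) \<longlongrightarrow> 2) (at_right (1 :: real))"
    by (auto intro!: tendsto_eq_intros)
qed

theorem mainTheorem3:
  shows "((\<lambda>s::real. (s - 1) * prod_p1mod3 (\<lambda>p. inverse ((1 - 1 / real p powr s)\<^sup>2)))
           \<longlongrightarrow> sqrt 3 / (2 * pi) * prod_p1mod3 (\<lambda>p. inverse (1 - 1 / (real p)\<^sup>2)))
         (at_right 1)"
proof -
  define Z2 where "Z2 = prime_restricted_zeta (\<lambda>p. p mod 3 = 2)"
  define K where "K = prod_p1mod3 (\<lambda>p. inverse (1 - 1 / (real p)\<^sup>2))"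
  have "Z2 2 \<noteq> 0"
    using prime_restricted_zeta_ge_1[of 2 "\<lambda>p. p mod 3 = 2"] by (simp add: Z2_def)
  then have lim: "((\<lambda>s. (s - 1) * zeta_real s * L_chi3 s * (1 - 3 powr -s) / Z2 (2 * s))
      \<longlongrightarrow> 1 * (pi / (3 * sqrt 3)) * (1 - 3 powr -1) / Z2 2) (at_right 1)"
    unfolding Z2_def
    by (intro tendsto_intros zeta_real_residue L_chi3_tendsto tendsto_prime_restricted_zeta_double)
      simp_all
  have eq: "eventually (\<lambda>s. (s - 1) * zeta_real s * L_chi3 s * (1 - 3 powr -s) / Z2 (2 * s)
      = (s - 1) * prod_p1mod3 (\<lambda>p. inverse ((1 - 1 / real p powr s)\<^sup>2))) (at_right 1)"
    by (rule eventually_at_rightI[of 1 2])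
      (simp_all add: prod_p1mod3_eq_zeta_real_L_chi3 Z2_def mult.assoc flip: times_divide_eq_right)
  have "(1 :: real) - 3 powr -1 = 2 / 3"
    by (simp add: powr_minus_divide)
  moreover have "K \<noteq> 0"
    using \<open>Z2 2 \<noteq> 0\<close> prime_restricted_zeta_2_mod_3_at_2 by (auto simp: Z2_def K_def)
  ultimately have limit_value:
      "1 * (pi / (3 * sqrt 3)) * (1 - 3 powr -1) / Z2 2 = sqrt 3 / (2 * pi) * K"
    unfolding Z2_def prime_restricted_zeta_2_mod_3_at_2 K_def[symmetric]
    by (simp add: field_simps power2_eq_square)
  show ?thesis
    using Lim_transform_eventually[OF lim eq] unfolding limit_value K_def .
qed

end
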